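(* Let $(p_{ij})_{i,j\in\{0,1\}}$ be a transition matrix with all $p_{ij}\in(0,1)$, and for $i\in\{0,1\}$, $n\in\mathbb N_0$ let $I_n^i$ be binomially $B(n,p_{i0})$ distributed. Let $(a_i(n))_{n\in\mathbb N_0}$, $(\varepsilon_i(n))_{n\in\mathbb N_0}$, $i\in\{0,1\}$, be real sequences satisfying $$a_i(n)=\mathbb E[a_0(I_n^i)]+\mathbb E[a_1(n-I_n^i)]+\varepsilon_i(n),\qquad i\in\{0,1\},\ n\in\mathbb N.$$ If $\varepsilon_i(n)=O(n^\alpha)$ for some $\alpha\in\mathbb R$ and both $i\in\{0,1\}$, then as $n\to\infty$, $a_i(n)=O(n)$ if $\alpha<1$, $a_i(n)=O(n^\alpha)$ if $\alpha>1$, and $a_i(n)=O(n\log n)$ if $\alpha=1$. *)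

theory Defs
  imports "HOL-Probability.Probability" "HOL-Library.Landau_Symbols"
begin

end

theory Submission
  imports Defs "HOL-Real_Asymp.Real_Asymp"
begin

text \<open>
  For a test function \<open>\<theta>\<close> with \<open>\<theta> 0 = 0\<close>, the split defect \<open>\<theta> n - E[\<theta> I + \<theta> (n - I)]\<close>,
  \<open>I\<close> binomial \<open>B(n, p)\<close>, is what \<open>\<theta>\<close> loses when \<open>n\<close> is split at random. If it is at least
  \<open>c * n powr \<tau>\<close> for \<open>p = p i 0\<close>, where \<open>\<tau> \<ge> max \<alpha> 0\<close>, then for a large constant \<open>C\<close> the
  functions \<open>a i - C * \<theta>\<close> satisfy the recursion with a nonpositive inhomogeneity, and a
  maximum principle for \<open>(a i n - C * \<theta> n) / n\<close> bounds them above by a multiple of \<open>n\<close>.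
  Applied to \<open>a\<close> and \<open>-a\<close> this gives \<open>\<bar>a i n\<bar> \<le> C * \<bar>\<theta> n\<bar> + O(n)\<close>.

  The defect is controlled by how far \<open>\<theta>\<close> lies below its chords: a gap of
  \<open>c * n powr (\<tau> - 2) * k * (n - k)\<close> averages, via \<open>E[I * (n - I)] = n * (n - 1) * p * (1 - p)\<close>,
  to a defect of order \<open>n powr \<tau>\<close>. The test functions are \<open>n powr \<alpha>\<close> for \<open>\<alpha> > 1\<close>,
  \<open>- n powr t\<close> with \<open>t = max \<alpha> 0\<close> for \<open>\<alpha> < 1\<close>, and \<open>n * ln n\<close> for \<open>\<alpha> = 1\<close>.
\<close>

definition binom_weight :: "nat \<Rightarrow> real \<Rightarrow> nat \<Rightarrow> real" where
  "binom_weight n p k = real (n choose k) * p ^ k * (1 - p) ^ (n - k)"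

lemma binom_weight_nonneg: "0 \<le> p \<Longrightarrow> p \<le> 1 \<Longrightarrow> 0 \<le> binom_weight n p k"
  unfolding binom_weight_def by simp

lemma binom_weight_0 [simp]: "binom_weight n p 0 = (1 - p) ^ n"
  unfolding binom_weight_def by simp

lemma binom_weight_self [simp]: "binom_weight n p n = p ^ n"
  unfolding binom_weight_def by simp

lemma sum_binom_weight: "(\<Sum>k\<le>n. binom_weight n p k) = 1"
proof -
  have "(\<Sum>k\<le>n. binom_weight n p k) = (p + (1 - p)) ^ n"
    unfolding binom_weight_def by (subst binomial_ring) (simp add: atLeast0AtMost)
  then show ?thesis by simp
qed

lemma expectation_binomial_pmf_eq_sum:
  assumes "p \<in> {0..1}"
  shows "measure_pmf.expectation (binomial_pmf n p) f = (\<Sum>k\<le>n. binom_weight n p k * f k)"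
  using assms by (simp add: expectation_binomial_pmf' binom_weight_def)

lemma sum_binom_weight_mult_complement:
  "(\<Sum>k\<le>n. binom_weight n p k * (real k * real (n - k))) = real n * (real n - 1) * p * (1 - p)"
proof (cases "n < 2")
  case True
  then have "n = 0 \<or> n = 1" by auto
  then show ?thesis by (auto simp: binom_weight_def)
next
  case False
  define m where "m = n - 2"
  have n: "n = Suc (Suc m)" using False unfolding m_def by simp
  define f where "f k = binom_weight n p k * (real k * real (n - k))" for k
  have shifted: "f (Suc j) = real n * real (m + 1) * p * (1 - p) * binom_weight m p j"
    if "j \<le> m" for j
  proof -
    have "Suc j * (n choose Suc j) = n * (m + 1 choose j)"
      using Suc_times_binomial_eq[of "m + 1" j] unfolding n by simp
    then have choose1: "real (Suc j) * real (n choose Suc j) = real n * real (m + 1 choose j)"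
      by (metis of_nat_mult)
    have choose2: "real (m + 1 - j) * real (m + 1 choose j) = real (m + 1) * real (m choose j)"
      using binomial_absorb_comp[of "m + 1" j] by (metis diff_add_inverse2 of_nat_mult)
    have exps: "n - Suc j = Suc (m - j)" "m + 1 - j = Suc (m - j)" using that unfolding n by auto
    have "f (Suc j)
        = (real (Suc j) * real (n choose Suc j)) * real (Suc (m - j)) * p * p ^ j * (1 - p) * (1 - p) ^ (m - j)"
      unfolding f_def binom_weight_def exps by (simp only: power_Suc mult_ac)
    also have "\<dots> = real n * (real (m + 1 - j) * real (m + 1 choose j)) * p * p ^ j * (1 - p) * (1 - p) ^ (m - j)"
      unfolding choose1 exps by (simp only: mult_ac)
    also have "\<dots> = real n * real (m + 1) * p * (1 - p) * binom_weight m p j"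
      unfolding choose2 binom_weight_def by (simp only: mult_ac)
    finally show ?thesis .
  qed
  have "(\<Sum>k\<le>n. f k) = f 0 + (\<Sum>j\<le>m. f (Suc j)) + f n"
    unfolding n by (subst sum.atMost_Suc_shift, subst sum.atMost_Suc) (rule add.assoc[symmetric])
  also have "\<dots> = (\<Sum>j\<le>m. f (Suc j))"
    by (simp add: f_def)
  also have "\<dots> = real n * real (m + 1) * p * (1 - p) * (\<Sum>j\<le>m. binom_weight m p j)"
    by (simp add: shifted sum_distrib_left)
  finally show ?thesis unfolding f_def by (simp add: sum_binom_weight n)
qed

definition split_defect :: "(nat \<Rightarrow> real) \<Rightarrow> real \<Rightarrow> nat \<Rightarrow> real" where
  "split_defect \<theta> p n = \<theta> n - (\<Sum>k\<le>n. binom_weight n p k * (\<theta> k + \<theta> (n - k)))"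

lemma split_defect_ge_of_pointwise_gap:
  assumes "0 \<le> p" "p \<le> 1"
    and pointwise: "\<And>k. k \<le> n \<Longrightarrow> d * (real k * real (n - k)) \<le> \<theta> n - \<theta> k - \<theta> (n - k)"
  shows "d * (real n * (real n - 1) * p * (1 - p)) \<le> split_defect \<theta> p n"
proof -
  have "d * (real n * (real n - 1) * p * (1 - p))
      = (\<Sum>k\<le>n. binom_weight n p k * (d * (real k * real (n - k))))"
    unfolding sum_binom_weight_mult_complement [symmetric] by (simp add: sum_distrib_left ac_simps)
  also have "\<dots> \<le> (\<Sum>k\<le>n. binom_weight n p k * (\<theta> n - \<theta> k - \<theta> (n - k)))"
    by (intro sum_mono mult_left_mono pointwise binom_weight_nonneg) (use assms in auto)
  also have "\<dots> = (\<Sum>k\<le>n. binom_weight n p k) * \<theta> n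
      - (\<Sum>k\<le>n. binom_weight n p k * (\<theta> k + \<theta> (n - k)))"
    by (simp add: algebra_simps sum_subtractf sum_distrib_left sum_distrib_right)
  also have "\<dots> = split_defect \<theta> p n"
    by (simp add: split_defect_def sum_binom_weight)
  finally show ?thesis .
qed

lemma split_defect_ge_of_chord_gap:
  fixes f :: "real \<Rightarrow> real"
  assumes "0 \<le> p" "p \<le> 1" "2 \<le> n" "0 \<le> c"
    and chord: "\<And>x. 0 \<le> x \<Longrightarrow> x \<le> real n \<Longrightarrow>
      c * real n powr (\<tau> - 2) * (x * (real n - x)) \<le> x / real n * f (real n) - f x"
  shows "c * (p * (1 - p)) * real n powr \<tau> \<le> split_defect (\<lambda>k. f (real k)) p n"
proof -
  define d where "d = 2 * c * real n powr (\<tau> - 2)"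
  have "d * (real k * real (n - k)) \<le> f (real n) - f (real k) - f (real (n - k))" if "k \<le> n" for k
  proof -
    have complement: "real n - real (n - k) = real k" "real n - real k = real (n - k)"
      using that by (auto simp: of_nat_diff)
    have "real k / real n * f (real n) + real (n - k) / real n * f (real n) = f (real n)"
      using that \<open>2 \<le> n\<close> by (simp add: of_nat_diff field_simps)
    with chord[of "real k"] chord[of "real (n - k)"] show ?thesis
      using that unfolding d_def complement by (simp add: algebra_simps)
  qed
  then have "d * (real n * (real n - 1) * p * (1 - p)) \<le> split_defect (\<lambda>k. f (real k)) p n"
    using assms by (intro split_defect_ge_of_pointwise_gap) auto
  moreover have "c * (p * (1 - p)) * real n powr \<tau> \<le> d * (real n * (real n - 1) * p * (1 - p))"
  proof -
    have "real n powr \<tau> = real n powr (\<tau> - 2) * (real n * real n)"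
      using powr_add[of "real n" "\<tau> - 2" 2] \<open>2 \<le> n\<close> by (simp add: power2_eq_square)
    moreover have "real n * real n \<le> 2 * (real n * (real n - 1))"
      using \<open>2 \<le> n\<close> by (simp add: algebra_simps)
    moreover have "0 \<le> c * (p * (1 - p)) * real n powr (\<tau> - 2)"
      using assms by simp
    ultimately have "c * (p * (1 - p)) * real n powr (\<tau> - 2) * (real n * real n)
        \<le> c * (p * (1 - p)) * real n powr (\<tau> - 2) * (2 * (real n * (real n - 1)))"
      by (intro mult_left_mono)
    with \<open>real n powr \<tau> = _\<close> show ?thesis
      unfolding d_def by (simp add: algebra_simps)
  qed
  ultimately show ?thesis by linarith
qed

lemma powr_le_one_minus_min_mult:
  fixes z s :: real
  assumes "0 \<le> z" "z \<le> 1" "0 < s"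
  shows "z powr s \<le> 1 - min s 1 * (1 - z)"
proof (cases "z = 0 \<or> 1 \<le> s")
  case True
  then show ?thesis
    using assms powr_le_one_le[of z s] by (cases "z = 0") (auto simp: min_def)
next
  case False
  with assms have "z powr s * 1 powr (1 - s) \<le> s * z + (1 - s) * 1"
    by (intro Youngs_inequality_0) auto
  with False show ?thesis by (simp add: algebra_simps)
qed

lemma one_plus_mult_le_powr_neg:
  fixes z u :: real
  assumes "0 < z" "z \<le> 1" "0 < u"
  shows "1 + u * (1 - z) \<le> z powr (- u)"
proof -
  have "u * (1 - z) \<le> u * (- ln z)"
    using assms ln_le_minus_one[of z] by (intro mult_left_mono) auto
  also have "1 + u * (- ln z) \<le> exp (- u * ln z)"
    using exp_ge_add_one_self[of "- u * ln z"] by simp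
  ultimately show ?thesis
    using assms by (simp add: powr_def)
qed

lemma powr_chord_gap:
  fixes x n \<alpha> :: real
  assumes "0 \<le> x" "x \<le> n" "0 < n" "1 < \<alpha>"
  shows "min (\<alpha> - 1) 1 * n powr (\<alpha> - 2) * (x * (n - x)) \<le> x / n * n powr \<alpha> - x powr \<alpha>"
proof (cases "x = 0")
  case False
  with assms have "(x / n) powr (\<alpha> - 1) \<le> 1 - min (\<alpha> - 1) 1 * (1 - x / n)"
    by (intro powr_le_one_minus_min_mult) auto
  then have "x * n powr (\<alpha> - 1) * (x / n) powr (\<alpha> - 1)
      \<le> x * n powr (\<alpha> - 1) * (1 - min (\<alpha> - 1) 1 * (1 - x / n))"
    using assms by (intro mult_left_mono) auto
  moreover have "x * n powr (\<alpha> - 1) * (x / n) powr (\<alpha> - 1) = x powr \<alpha>"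
    using assms False by (simp add: powr_divide powr_mult_base)
  moreover have "x * n powr (\<alpha> - 1) * (1 - min (\<alpha> - 1) 1 * (1 - x / n))
      = x / n * n powr \<alpha> - min (\<alpha> - 1) 1 * n powr (\<alpha> - 2) * (x * (n - x))"
  proof -
    have "n powr \<alpha> = n * n powr (\<alpha> - 1)" "n powr (\<alpha> - 1) = n * n powr (\<alpha> - 2)"
      using assms by (simp_all add: powr_mult_base)
    then show ?thesis
      using assms by (simp add: field_simps)
  qed
  ultimately show ?thesis by linarith
qed simp

lemma neg_powr_chord_gap:
  fixes x n t :: real
  assumes "0 \<le> x" "x \<le> n" "0 < n" "t < 1"
  shows "(1 - t) * n powr (t - 2) * (x * (n - x)) \<le> x powr t - x / n * n powr t"
proof (cases "x = 0")
  case False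
  with assms have "1 + (1 - t) * (1 - x / n) \<le> (x / n) powr (- (1 - t))"
    by (intro one_plus_mult_le_powr_neg) auto
  then have "x * n powr (t - 1) * (1 + (1 - t) * (1 - x / n)) \<le> x * n powr (t - 1) * (x / n) powr (t - 1)"
    using assms by (intro mult_left_mono) auto
  moreover have "x * n powr (t - 1) * (x / n) powr (t - 1) = x powr t"
    using assms False by (simp add: powr_divide powr_mult_base)
  moreover have "x * n powr (t - 1) * (1 + (1 - t) * (1 - x / n))
      = x / n * n powr t + (1 - t) * n powr (t - 2) * (x * (n - x))"
  proof -
    have "n powr t = n * n powr (t - 1)" "n powr (t - 1) = n * n powr (t - 2)"
      using assms by (simp_all add: powr_mult_base)
    then show ?thesis
      using assms by (simp add: field_simps)
  qed
  ultimately show ?thesis by linarith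
qed simp

lemma xlnx_chord_gap:
  fixes x n :: real
  assumes "0 \<le> x" "x \<le> n" "0 < n"
  shows "x * (n - x) / n \<le> x / n * (n * ln n) - x * ln x"
proof (cases "x = 0")
  case False
  with assms have "ln (x / n) \<le> x / n - 1"
    by (intro ln_le_minus_one) auto
  then have "x * (1 - x / n) \<le> x * (ln n - ln x)"
    using assms False by (intro mult_left_mono) (auto simp: ln_div)
  then show ?thesis
    using assms by (simp add: field_simps)
qed simp

lemma power_add_power_complement_less_one:
  fixes p :: real
  assumes "0 < p" "p < 1" "2 \<le> n"
  shows "(1 - p) ^ n + p ^ n < 1"
  using power_strict_decreasing[of 1 n p] power_strict_decreasing[of 1 n "1 - p"] assms by simp

lemma sum_atMost_mult_if_eq:
  fixes f :: "nat \<Rightarrow> 'a::semiring_0"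
  assumes "j \<le> n"
  shows "(\<Sum>k\<le>n. f k * (if k = j then c else 0)) = f j * c"
proof -
  have "(\<Sum>k\<le>n. f k * (if k = j then c else 0)) = (\<Sum>k\<le>n. if k = j then f k * c else 0)"
    by (rule sum.cong) auto
  then show ?thesis using assms by simp
qed

lemma binomial_average_le:
  fixes h :: "nat \<Rightarrow> real"
  assumes "0 \<le> p" "p \<le> 1" "0 < n"
    and inner: "\<And>k. 0 < k \<Longrightarrow> k < n \<Longrightarrow> h k \<le> M"
    and ends: "h 0 \<le> M + D" "h n \<le> M + D"
  shows "(\<Sum>k\<le>n. binom_weight n p k * h k) \<le> M + ((1 - p) ^ n + p ^ n) * D"
proof -
  have "h k \<le> M + ((if k = 0 then D else 0) + (if k = n then D else 0))" if "k \<le> n" for k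
    using assms that by (cases "k = 0"; cases "k = n") auto
  then have "(\<Sum>k\<le>n. binom_weight n p k * h k)
      \<le> (\<Sum>k\<le>n. binom_weight n p k * (M + ((if k = 0 then D else 0) + (if k = n then D else 0))))"
    by (intro sum_mono mult_left_mono binom_weight_nonneg) (use assms in auto)
  also have "\<dots> = M + ((1 - p) ^ n + p ^ n) * D"
    by (simp add: distrib_left sum.distrib sum_atMost_mult_if_eq sum_binom_weight algebra_simps
        flip: sum_distrib_left)
  finally show ?thesis .
qed

text \<open>The endpoints \<open>k = 0\<close> and \<open>k = n\<close>, where \<open>b _ n\<close> itself reappears, carry total
  weight \<open>(1 - p) ^ n + p ^ n < 1\<close>; so the largest value at \<open>n\<close> cannot exceed the linear
  bound that holds below \<open>n\<close>.\<close>

lemma max_principle_step: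
  fixes b :: "nat \<Rightarrow> nat \<Rightarrow> real"
  assumes "0 < p" "p < 1" "2 \<le> n" "b 0 0 = 0" "b 1 0 = 0"
    and below: "\<And>j k. j \<in> {0,1} \<Longrightarrow> 0 < k \<Longrightarrow> k < n \<Longrightarrow> b j k \<le> E * real k"
    and sub: "max (b 0 n) (b 1 n) \<le> (\<Sum>k\<le>n. binom_weight n p k * (b 0 k + b 1 (n - k)))"
  shows "max (b 0 n) (b 1 n) \<le> E * real n"
proof -
  define Y where "Y = max (b 0 n) (b 1 n)"
  define s where "s = (1 - p) ^ n + p ^ n"
  have "Y \<le> E * real n + s * (Y - E * real n)"
    unfolding s_def Y_def using sub
  proof (rule order_trans[OF _ binomial_average_le])
    fix k assume k: "0 < k" "k < n"
    have "b 0 k \<le> E * real k" "b 1 (n - k) \<le> E * real (n - k)"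
      using below[of 0 k] below[of 1 "n - k"] k by auto
    moreover have "real k + real (n - k) = real n"
      using k by simp
    ultimately show "b 0 k + b 1 (n - k) \<le> E * real n"
      by (metis add_mono distrib_left)
  qed (use assms in auto)
  then have "(1 - s) * (Y - E * real n) \<le> 0"
    by (simp add: algebra_simps)
  moreover have "s < 1"
    unfolding s_def using assms by (intro power_add_power_complement_less_one)
  ultimately show ?thesis
    unfolding Y_def by (simp add: mult_le_0_iff)
qed

lemma linear_bound_by_max_principle:
  fixes b :: "nat \<Rightarrow> nat \<Rightarrow> real" and P :: "nat \<Rightarrow> real"
  assumes P: "\<And>i. i \<in> {0,1} \<Longrightarrow> 0 < P i \<and> P i < 1"
    and at_0: "b 0 0 = 0" "b 1 0 = 0"
    and sub: "\<And>i n. i \<in> {0,1} \<Longrightarrow> N \<le> n \<Longrightarrow>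
      b i n \<le> (\<Sum>k\<le>n. binom_weight n (P i) k * (b 0 k + b 1 (n - k)))"
  shows "\<exists>E. \<forall>n\<ge>1. \<forall>i\<in>{0,1}. b i n \<le> E * real n"
proof -
  define N2 where "N2 = max N 2"
  define E where "E = Max ((\<lambda>(j, k). b j k / real k) ` ({0, 1} \<times> {1..N2}))"
  have "b j n \<le> E * real n" if "j \<in> {0,1}" "1 \<le> n" for j n
    using that
  proof (induction n arbitrary: j rule: less_induct)
    case (less n)
    show ?case
    proof (cases "n \<le> N2")
      case True
      then have "b j n / real n \<le> E"
        unfolding E_def using less.prems by (intro Max_ge) force+
      then show ?thesis
        using less.prems by (simp add: divide_le_eq mult.commute)
    next
      case False
      then have n: "N \<le> n" "2 \<le> n" by (auto simp: N2_def)
      obtain i where i: "i \<in> {0,1}" "b i n = max (b 0 n) (b 1 n)"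
        by (cases "b 0 n \<le> b 1 n") (auto simp: max_def)
      have "max (b 0 n) (b 1 n) \<le> E * real n"
        using P[OF i(1)] n at_0 less.IH sub[OF i(1) n(1)] i(2)
        by (intro max_principle_step[where p = "P i"]) auto
      then show ?thesis
        using less.prems by auto
    qed
  qed
  then show ?thesis by blast
qed

lemma upper_bound_by_test_function:
  fixes a eps :: "nat \<Rightarrow> nat \<Rightarrow> real" and P \<theta> :: "nat \<Rightarrow> real"
  assumes P: "\<And>i. i \<in> {0,1} \<Longrightarrow> 0 < P i \<and> P i < 1"
    and rec: "\<And>i n. i \<in> {0,1} \<Longrightarrow> 1 \<le> n \<Longrightarrow>
      a i n = (\<Sum>k\<le>n. binom_weight n (P i) k * (a 0 k + a 1 (n - k))) + eps i n"
    and "\<theta> 0 = 0"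
    and dominated: "\<And>i n. i \<in> {0,1} \<Longrightarrow> N \<le> n \<Longrightarrow>
      eps i n + (1 - P i) ^ n * a 0 0 + P i ^ n * a 1 0 \<le> C * split_defect \<theta> (P i) n"
  shows "\<exists>E. \<forall>n\<ge>1. \<forall>i\<in>{0,1}. a i n \<le> C * \<theta> n + E * real n"
proof -
  \<comment> \<open>Zeroing \<open>b\<close> at \<open>0\<close> moves the boundary values \<open>a i 0\<close> into the inhomogeneity,
    which \<open>dominated\<close> pays for.\<close>
  define b where "b i n = (if n = 0 then 0 else a i n - C * \<theta> n)" for i n
  have "\<exists>E. \<forall>n\<ge>1. \<forall>i\<in>{0,1}. b i n \<le> E * real n"
  proof (rule linear_bound_by_max_principle[where P = P and N = "max N 1"])
    fix i n assume i: "i \<in> {0::nat,1}" and n: "max N 1 \<le> n"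
    define w where "w k = binom_weight n (P i) k" for k
    have "(\<Sum>k\<le>n. w k * (b 0 k + b 1 (n - k)))
        = (\<Sum>k\<le>n. w k * (a 0 k + a 1 (n - k)) - C * (w k * (\<theta> k + \<theta> (n - k)))
            - w k * (if k = 0 then a 0 0 else 0) - w k * (if k = n then a 1 0 else 0))"
      using n \<open>\<theta> 0 = 0\<close> by (intro sum.cong refl) (auto simp: b_def algebra_simps)
    also have "\<dots> = (\<Sum>k\<le>n. w k * (a 0 k + a 1 (n - k))) - C * (\<Sum>k\<le>n. w k * (\<theta> k + \<theta> (n - k)))
          - w 0 * a 0 0 - w n * a 1 0"
      by (simp add: sum_subtractf sum_distrib_left sum_atMost_mult_if_eq)
    finally have "(\<Sum>k\<le>n. w k * (b 0 k + b 1 (n - k)))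
        = (\<Sum>k\<le>n. w k * (a 0 k + a 1 (n - k))) - C * (\<Sum>k\<le>n. w k * (\<theta> k + \<theta> (n - k)))
          - (1 - P i) ^ n * a 0 0 - P i ^ n * a 1 0"
      by (simp add: w_def)
    moreover have "b i n = a i n - C * \<theta> n"
      using n by (simp add: b_def)
    ultimately show "b i n \<le> (\<Sum>k\<le>n. binom_weight n (P i) k * (b 0 k + b 1 (n - k)))"
      using rec[OF i, of n] dominated[OF i, of n] n
      unfolding w_def split_defect_def right_diff_distrib by linarith
  qed (use P in \<open>auto simp: b_def\<close>)
  then show ?thesis
    by (simp add: b_def) (metis diff_le_eq add.commute)
qed

lemma mult_le_abs_of_unit_interval:
  fixes w y :: real
  assumes "0 \<le> w" "w \<le> 1"
  shows "w * y \<le> \<bar>y\<bar>"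
proof -
  have "w * y \<le> w * \<bar>y\<bar>"
    using assms by (intro mult_left_mono) auto
  also have "\<dots> \<le> \<bar>y\<bar>"
    using assms mult_left_le_one_le[of "\<bar>y\<bar>" w] by simp
  finally show ?thesis .
qed

lemma abs_add_le_mult_of_powr_le:
  fixes e A B K c D :: real
  assumes "1 \<le> n" "0 \<le> \<tau>" "\<alpha> \<le> \<tau>" "0 < c"
    and "\<bar>e\<bar> \<le> K * real n powr \<alpha>" "c * real n powr \<tau> \<le> D"
  shows "\<bar>e\<bar> + \<bar>A\<bar> + \<bar>B\<bar> \<le> (\<bar>K\<bar> + \<bar>A\<bar> + \<bar>B\<bar>) / c * D"
proof -
  have "1 \<le> real n powr \<tau>"
    using assms by (simp add: ge_one_powr_ge_zero)
  have "\<bar>e\<bar> \<le> K * real n powr \<alpha>"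
    by fact
  also have "\<dots> \<le> \<bar>K\<bar> * real n powr \<tau>"
    using assms by (intro mult_mono powr_mono) auto
  finally have "\<bar>e\<bar> + \<bar>A\<bar> + \<bar>B\<bar> \<le> (\<bar>K\<bar> + \<bar>A\<bar> + \<bar>B\<bar>) * real n powr \<tau>"
    using mult_left_mono[OF \<open>1 \<le> real n powr \<tau>\<close>, of "\<bar>A\<bar>"]
      mult_left_mono[OF \<open>1 \<le> real n powr \<tau>\<close>, of "\<bar>B\<bar>"]
    by (simp add: distrib_right)
  also have "\<dots> = (\<bar>K\<bar> + \<bar>A\<bar> + \<bar>B\<bar>) / c * (c * real n powr \<tau>)"
    using \<open>0 < c\<close> by simp
  also have "\<dots> \<le> (\<bar>K\<bar> + \<bar>A\<bar> + \<bar>B\<bar>) / c * D"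
    using assms by (intro mult_left_mono) auto
  finally show ?thesis .
qed

lemma abs_bound_by_test_function:
  fixes a eps :: "nat \<Rightarrow> nat \<Rightarrow> real" and P \<theta> :: "nat \<Rightarrow> real"
  assumes P: "\<And>i. i \<in> {0,1} \<Longrightarrow> 0 < P i \<and> P i < 1"
    and rec: "\<And>i n. i \<in> {0,1} \<Longrightarrow> 1 \<le> n \<Longrightarrow>
      a i n = (\<Sum>k\<le>n. binom_weight n (P i) k * (a 0 k + a 1 (n - k))) + eps i n"
    and "\<theta> 0 = 0" "0 \<le> \<tau>" "\<alpha> \<le> \<tau>" "0 < c"
    and eps_le: "\<And>i n. i \<in> {0,1} \<Longrightarrow> N \<le> n \<Longrightarrow> \<bar>eps i n\<bar> \<le> K * real n powr \<alpha>"
    and defect: "\<And>i n. i \<in> {0,1} \<Longrightarrow> 2 \<le> n \<Longrightarrow> c * real n powr \<tau> \<le> split_defect \<theta> (P i) n"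
  shows "\<exists>C E. \<forall>n\<ge>1. \<forall>i\<in>{0,1}. \<bar>a i n\<bar> \<le> C * \<bar>\<theta> n\<bar> + E * real n"
proof -
  define C where "C = (\<bar>K\<bar> + \<bar>a 0 0\<bar> + \<bar>a 1 0\<bar>) / c"
  have "0 \<le> C"
    using \<open>0 < c\<close> by (simp add: C_def)
  have dominated: "\<bar>eps i n\<bar> + \<bar>a 0 0\<bar> + \<bar>a 1 0\<bar> \<le> C * split_defect \<theta> (P i) n"
    if i: "i \<in> {0,1}" and n: "max N 2 \<le> n" for i n
    unfolding C_def using eps_le[OF i] defect[OF i] n \<open>0 \<le> \<tau>\<close> \<open>\<alpha> \<le> \<tau>\<close> \<open>0 < c\<close>
    by (intro abs_add_le_mult_of_powr_le[where \<alpha> = \<alpha> and \<tau> = \<tau> and n = n]) auto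
  have boundary: "(1 - P i) ^ n * y \<le> \<bar>y\<bar>" "P i ^ n * y \<le> \<bar>y\<bar>" if "i \<in> {0,1}" for i n y
    using P[OF that] by (auto intro!: mult_le_abs_of_unit_interval power_le_one)
  have dominated_pos: "eps i n + (1 - P i) ^ n * a 0 0 + P i ^ n * a 1 0 \<le> C * split_defect \<theta> (P i) n"
    if "i \<in> {0,1}" "max N 2 \<le> n" for i n
    using dominated[OF that] boundary(1)[OF that(1), of n "a 0 0"] boundary(2)[OF that(1), of n "a 1 0"]
      abs_ge_self[of "eps i n"] by linarith
  have dominated_neg: "- eps i n + (1 - P i) ^ n * - a 0 0 + P i ^ n * - a 1 0 \<le> C * split_defect \<theta> (P i) n"
    if "i \<in> {0,1}" "max N 2 \<le> n" for i n
    using dominated[OF that] boundary(1)[OF that(1), of n "- a 0 0"] boundary(2)[OF that(1), of n "- a 1 0"]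
      abs_ge_minus_self[of "eps i n"] by (simp only: abs_minus_cancel)
  have rec_neg: "- a i n = (\<Sum>k\<le>n. binom_weight n (P i) k * (- a 0 k + - a 1 (n - k))) + - eps i n"
    if "i \<in> {0,1}" "1 \<le> n" for i n
    using rec[OF that] by (simp add: sum_negf [symmetric] algebra_simps)
  obtain E1 where E1: "\<forall>n\<ge>1. \<forall>i\<in>{0,1}. a i n \<le> C * \<theta> n + E1 * real n"
    using upper_bound_by_test_function[where a = a and eps = eps and P = P and \<theta> = \<theta>,
        OF P rec \<open>\<theta> 0 = 0\<close> dominated_pos] by blast
  obtain E2 where E2: "\<forall>n\<ge>1. \<forall>i\<in>{0,1}. - a i n \<le> C * \<theta> n + E2 * real n"
    using upper_bound_by_test_function[where a = "\<lambda>i n. - a i n" and eps = "\<lambda>i n. - eps i n"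
        and P = P and \<theta> = \<theta>, OF P rec_neg \<open>\<theta> 0 = 0\<close> dominated_neg] by blast
  have "\<bar>a i n\<bar> \<le> C * \<bar>\<theta> n\<bar> + (\<bar>E1\<bar> + \<bar>E2\<bar>) * real n" if "1 \<le> n" "i \<in> {0,1}" for i n
  proof -
    have "C * \<theta> n \<le> C * \<bar>\<theta> n\<bar>" "E1 * real n \<le> (\<bar>E1\<bar> + \<bar>E2\<bar>) * real n"
      "E2 * real n \<le> (\<bar>E1\<bar> + \<bar>E2\<bar>) * real n"
      using \<open>0 \<le> C\<close> by (auto intro!: mult_left_mono mult_right_mono)
    moreover have "a i n \<le> C * \<theta> n + E1 * real n" "- a i n \<le> C * \<theta> n + E2 * real n"
      using E1 E2 that by auto
    ultimately show ?thesis
      unfolding abs_le_iff by linarith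
  qed
  then show ?thesis by blast
qed

lemma eventually_abs_le_powr_of_bigo:
  fixes eps :: "nat \<Rightarrow> nat \<Rightarrow> real"
  assumes "\<And>i. i \<in> {0,1} \<Longrightarrow> (\<lambda>n. eps i n) \<in> O(\<lambda>n. real n powr \<alpha>)"
  shows "\<exists>K. eventually (\<lambda>n. \<forall>i\<in>{0,1}. \<bar>eps i n\<bar> \<le> K * real n powr \<alpha>) at_top"
proof -
  obtain K0 K1 where
    "eventually (\<lambda>n. norm (eps 0 n) \<le> K0 * norm (real n powr \<alpha>)) at_top"
    "eventually (\<lambda>n. norm (eps 1 n) \<le> K1 * norm (real n powr \<alpha>)) at_top"
    using assms[of 0] assms[of 1] by (auto elim!: landau_o.bigE)
  then have "eventually (\<lambda>n. \<forall>i\<in>{0,1}. \<bar>eps i n\<bar> \<le> max K0 K1 * real n powr \<alpha>) at_top"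
  proof eventually_elim
    case (elim n)
    have "K0 * real n powr \<alpha> \<le> max K0 K1 * real n powr \<alpha>" "K1 * real n powr \<alpha> \<le> max K0 K1 * real n powr \<alpha>"
      by (intro mult_right_mono; simp)+
    with elim show ?case by auto
  qed
  then show ?thesis ..
qed

lemma bigo_by_test_function:
  fixes a eps :: "nat \<Rightarrow> nat \<Rightarrow> real" and P :: "nat \<Rightarrow> real"
    and f :: "real \<Rightarrow> real" and g :: "nat \<Rightarrow> real"
  assumes P: "\<And>i. i \<in> {0,1} \<Longrightarrow> 0 < P i \<and> P i < 1"
    and rec: "\<And>i n. i \<in> {0,1} \<Longrightarrow> 1 \<le> n \<Longrightarrow>
      a i n = (\<Sum>k\<le>n. binom_weight n (P i) k * (a 0 k + a 1 (n - k))) + eps i n"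
    and eps_O: "\<And>i. i \<in> {0,1} \<Longrightarrow> (\<lambda>n. eps i n) \<in> O(\<lambda>n. real n powr \<alpha>)"
    and "0 \<le> \<tau>" "\<alpha> \<le> \<tau>" "0 < c" "f 0 = 0"
    and chord: "\<And>n x. 2 \<le> n \<Longrightarrow> 0 \<le> x \<Longrightarrow> x \<le> real n \<Longrightarrow>
      c * real n powr (\<tau> - 2) * (x * (real n - x)) \<le> x / real n * f (real n) - f x"
    and f_O: "(\<lambda>n. f (real n)) \<in> O(g)" and real_O: "(\<lambda>n. real n) \<in> O(g)"
    and "i \<in> {0,1}"
  shows "(\<lambda>n. a i n) \<in> O(g)"
proof -
  obtain K where "eventually (\<lambda>n. \<forall>i\<in>{0,1}. \<bar>eps i n\<bar> \<le> K * real n powr \<alpha>) at_top"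
    using eventually_abs_le_powr_of_bigo[OF eps_O] ..
  then obtain N where eps_le: "\<And>i n. i \<in> {0,1} \<Longrightarrow> N \<le> n \<Longrightarrow> \<bar>eps i n\<bar> \<le> K * real n powr \<alpha>"
    unfolding eventually_at_top_linorder by blast
  define m where "m = min (P 0 * (1 - P 0)) (P 1 * (1 - P 1))"
  have "0 < m"
    using P[of 0] P[of 1] by (simp add: m_def)
  have defect: "c * m * real n powr \<tau> \<le> split_defect (\<lambda>k. f (real k)) (P j) n"
    if j: "j \<in> {0,1}" and n: "2 \<le> n" for j n
  proof -
    have "c * m * real n powr \<tau> \<le> c * (P j * (1 - P j)) * real n powr \<tau>"
      using j \<open>0 < c\<close> by (intro mult_right_mono mult_left_mono) (auto simp: m_def)
    also have "\<dots> \<le> split_defect (\<lambda>k. f (real k)) (P j) n"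
      using P[OF j] n \<open>0 < c\<close> chord by (intro split_defect_ge_of_chord_gap) auto
    finally show ?thesis .
  qed
  have "0 < c * m"
    using \<open>0 < c\<close> \<open>0 < m\<close> by simp
  from abs_bound_by_test_function[where \<theta> = "\<lambda>k. f (real k)" and c = "c * m" and N = N and K = K,
      OF P rec _ \<open>0 \<le> \<tau>\<close> \<open>\<alpha> \<le> \<tau>\<close> \<open>0 < c * m\<close> eps_le defect] \<open>f 0 = 0\<close>
  obtain C E where bound: "\<forall>n\<ge>1. \<forall>j\<in>{0,1}. \<bar>a j n\<bar> \<le> C * \<bar>f (real n)\<bar> + E * real n"
    by auto
  have "(\<lambda>n. a i n) \<in> O(\<lambda>n. \<bar>f (real n)\<bar> + real n)"
  proof (rule bigoI[where c = "\<bar>C\<bar> + \<bar>E\<bar>"])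
    show "eventually (\<lambda>n. norm (a i n) \<le> (\<bar>C\<bar> + \<bar>E\<bar>) * norm (\<bar>f (real n)\<bar> + real n)) at_top"
      unfolding eventually_at_top_linorder
    proof (intro exI allI impI)
      fix n :: nat assume "1 \<le> n"
      have "C * \<bar>f (real n)\<bar> \<le> (\<bar>C\<bar> + \<bar>E\<bar>) * \<bar>f (real n)\<bar>" "E * real n \<le> (\<bar>C\<bar> + \<bar>E\<bar>) * real n"
        by (intro mult_right_mono; simp)+
      moreover have "\<bar>a i n\<bar> \<le> C * \<bar>f (real n)\<bar> + E * real n"
        using bound \<open>1 \<le> n\<close> \<open>i \<in> {0,1}\<close> by auto
      ultimately show "norm (a i n) \<le> (\<bar>C\<bar> + \<bar>E\<bar>) * norm (\<bar>f (real n)\<bar> + real n)"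
        by (simp add: distrib_left)
    qed
  qed
  also have "(\<lambda>n. \<bar>f (real n)\<bar> + real n) \<in> O(g)"
    using f_O real_O by (intro sum_in_bigo) simp_all
  finally show ?thesis .
qed

theorem lemma4p1:
  fixes p :: "nat \<Rightarrow> nat \<Rightarrow> real"
    and a eps :: "nat \<Rightarrow> nat \<Rightarrow> real"
    and \<alpha> :: real
  assumes p_range: "\<And>i j. i \<in> {0,1} \<Longrightarrow> j \<in> {0,1} \<Longrightarrow> p i j \<in> {0<..<1}"
    and p_stoch: "\<And>i. i \<in> {0,1} \<Longrightarrow> p i 0 + p i 1 = 1"
    and rec: "\<And>i n. i \<in> {0,1} \<Longrightarrow> n \<ge> 1 \<Longrightarrow>
      a i n = measure_pmf.expectation (binomial_pmf n (p i 0)) (\<lambda>k. a 0 k)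
            + measure_pmf.expectation (binomial_pmf n (p i 0)) (\<lambda>k. a 1 (n - k))
            + eps i n"
    and eps_O: "\<And>i. i \<in> {0,1} \<Longrightarrow> (\<lambda>n. eps i n) \<in> O(\<lambda>n. real n powr \<alpha>)"
  shows "\<forall>i\<in>{0,1}.
      (\<alpha> < 1 \<longrightarrow> (\<lambda>n. a i n) \<in> O(\<lambda>n. real n)) \<and>
      (\<alpha> > 1 \<longrightarrow> (\<lambda>n. a i n) \<in> O(\<lambda>n. real n powr \<alpha>)) \<and>
      (\<alpha> = 1 \<longrightarrow> (\<lambda>n. a i n) \<in> O(\<lambda>n. real n * ln (real n)))"
proof -
  \<comment> \<open>Only \<open>p i 0\<close> enters the recursion.\<close>
  define P where "P i = p i 0" for i
  have P: "0 < P i \<and> P i < 1" if "i \<in> {0,1}" for i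
    using p_range[OF that, of 0] by (simp add: P_def)
  have rec_sum: "a i n = (\<Sum>k\<le>n. binom_weight n (P i) k * (a 0 k + a 1 (n - k))) + eps i n"
    if "i \<in> {0,1}" "1 \<le> n" for i n
    using rec[OF that] P[OF that(1)]
    by (simp add: P_def expectation_binomial_pmf_eq_sum sum.distrib distrib_left)
  note bigo = bigo_by_test_function[where P = P, OF P rec_sum eps_O]
  show ?thesis
  proof (intro ballI conjI impI)
    fix i :: nat assume i: "i \<in> {0,1}"
    show "(\<lambda>n. a i n) \<in> O(\<lambda>n. real n)" if "\<alpha> < 1"
    proof -
      define t where "t = max \<alpha> 0"
      have "t < 1" using that by (simp add: t_def)
      have "(\<lambda>n. - (real n powr t)) \<in> O(\<lambda>n. real n)"
        using \<open>t < 1\<close> by real_asymp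
      then show ?thesis
        using neg_powr_chord_gap[of _ _ t] \<open>t < 1\<close> i
        by (intro bigo[where f = "\<lambda>x. - (x powr t)" and \<tau> = t and c = "1 - t"]) (auto simp: t_def)
    qed
    show "(\<lambda>n. a i n) \<in> O(\<lambda>n. real n powr \<alpha>)" if "1 < \<alpha>"
    proof -
      have "(\<lambda>n. real n) \<in> O(\<lambda>n. real n powr \<alpha>)"
        using that by real_asymp
      then show ?thesis
        using powr_chord_gap[of _ _ \<alpha>] that i
        by (intro bigo[where f = "\<lambda>x. x powr \<alpha>" and \<tau> = \<alpha> and c = "min (\<alpha> - 1) 1"]) auto
    qed
    show "(\<lambda>n. a i n) \<in> O(\<lambda>n. real n * ln (real n))" if "\<alpha> = 1"
    proof -
      have "(\<lambda>n. real n) \<in> O(\<lambda>n. real n * ln (real n))"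
        by real_asymp
      then show ?thesis
        using xlnx_chord_gap that i
        by (intro bigo[where f = "\<lambda>x. x * ln x" and \<tau> = 1 and c = 1]) (auto simp: powr_minus_divide)
    qed
  qed
qed

end
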